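(* Let $\mu>0$, $\sigma\ge 0$ and $r=\sigma/\mu$. Then the deterministic robust approximation ratio for selling a single item satisfies \[\mathrm{DAPX}(\mu,\sigma)=\inf_{p\ge 0}\ \sup_{F\in\mathbb{F}_{\mu,\sigma}}\frac{\mathrm{OPT}(F)}{\mathrm{REV}(p;F)}=\rho_D(r),\] where $\rho_D(r)$ is the unique positive solution $\rho$ of $\frac{(\rho-1)^3}{(2\rho-1)^2}=r^2$. Moreover, this value is achieved by the take-it-or-leave-it price $p=\frac{\rho_D(r)}{2\rho_D(r)-1}\cdot\mu$, i.e. $\sup_{F\in\mathbb{F}_{\mu,\sigma}}\mathrm{OPT}(F)/\mathrm{REV}(p;F)=\rho_D(r)$ for this $p$.
   Context: A nonnegative real random variable is $(\mu,\sigma)$-distributed if its expectation is $\mu$ and its standard deviation is at most $\sigma$; $\mathbb{F}_{\mu,\sigma}$ denotes the class of distributions of such random variables. There is one item and one buyer whose value $X$ is drawn from $F$. For a price $p\ge 0$, $\mathrm{REV}(p;F)=p\cdot\Pr[X\ge p]$ is the revenue of posting the take-it-or-leave-it price $p$, and $\mathrm{OPT}(F)=\sup_{p\ge0}\mathrm{REV}(p;F)$ is the optimal revenue over all truthful (possibly randomized) mechanisms. A ratio with zero denominator is interpreted as $+\infty$. *)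

theory Defs
  imports "HOL-Probability.Probability"
begin

definition mv_dists :: "real \<Rightarrow> real \<Rightarrow> real measure set" where
  "mv_dists mu sd = {M. prob_space M \<and> sets M = sets borel \<and>
      (AE x in M. 0 \<le> x) \<and>
      integrable M (\<lambda>x. x) \<and> integrable M (\<lambda>x. x ^ 2) \<and>
      prob_space.expectation M (\<lambda>x. x) = mu \<and>
      prob_space.variance M (\<lambda>x. x) \<le> sd ^ 2}"

definition REV :: "real \<Rightarrow> real measure \<Rightarrow> real" where
  "REV p M = p * measure M {p..}"

definition OPT :: "real measure \<Rightarrow> ereal" where
  "OPT M = (SUP p\<in>{0..}. ereal (REV p M))"

definition ratio :: "ereal \<Rightarrow> real \<Rightarrow> ereal" where
  "ratio a b = (if b = 0 then \<infinity> else a / ereal b)"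

definition DAPX :: "real \<Rightarrow> real \<Rightarrow> ereal" where
  "DAPX mu sd = (INF p\<in>{0..}. SUP M\<in>mv_dists mu sd. ratio (OPT M) (REV p M))"

definition rho_eq :: "real \<Rightarrow> real \<Rightarrow> bool" where
  "rho_eq r \<rho> \<longleftrightarrow> \<rho> > 0 \<and> 2 * \<rho> - 1 \<noteq> 0 \<and> (\<rho> - 1) ^ 3 / (2 * \<rho> - 1) ^ 2 = r ^ 2"

definition rho_D :: "real \<Rightarrow> real" where
  "rho_D r = (THE \<rho>. rho_eq r \<rho>)"

end

theory Submission
  imports Defs "HOL-Real_Asymp.Real_Asymp"
begin

(* Let rho = rho_D (sd/mu), p = rho/(2 rho - 1) mu, h = rho p and m = (p + h)/2.
   Upper bound: integrating the pointwise bounds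
     1 - (x - h)^2/(h - p)^2 <= 1{x >= p}   and
     t 1{x >= t} - h 1{x >= p} <= h ((x - m)^2/(m - p)^2 - 1)   (t >= h)
   against any admissible law gives Pr[X >= p] >= 1/rho and t Pr[X >= t] <= h Pr[X >= p],
   hence REV t <= rho REV p for every t >= 0. The equation defining rho is exactly what
   makes both second-moment bounds sharp.
   Lower bound: for any price p, the two-point laws with atoms mu - d and mu + sd^2/d have
   mean mu and variance sd^2, and the seller could have sold at either atom instead. As d
   decreases to max 0 (mu - p), the better of the two revenue quotients tends to a value
   >= rho (to infinity if p >= mu). *)

section \<open>The equation defining rho_D\<close>

lemma rho_eq_iff: "rho_eq r x \<longleftrightarrow> 1 \<le> x \<and> (x - 1) ^ 3 / (2 * x - 1) ^ 2 = r ^ 2"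
proof
  assume x: "rho_eq r x"
  have "1 \<le> x"
  proof (rule ccontr)
    assume "\<not> 1 \<le> x"
    moreover have "(2 * x - 1) ^ 2 > 0" using x unfolding rho_eq_def by simp
    ultimately have "(x - 1) ^ 3 / (2 * x - 1) ^ 2 < 0" by (simp add: divide_neg_pos)
    then show False using x unfolding rho_eq_def by (metis zero_le_power2 not_le)
  qed
  then show "1 \<le> x \<and> (x - 1) ^ 3 / (2 * x - 1) ^ 2 = r ^ 2" using x unfolding rho_eq_def by simp
qed (auto simp: rho_eq_def)

lemma rho_fun_factor: "(x - 1) ^ 3 / (2 * x - 1) ^ 2 = (x - 1) * ((x - 1) / (2 * x - 1)) ^ 2"
  for x :: real
  by (simp add: power_divide power3_eq_cube power2_eq_square)

lemma strict_mono_on_rho_fun: "strict_mono_on {1..} (\<lambda>x::real. (x - 1) ^ 3 / (2 * x - 1) ^ 2)"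
proof (rule strict_mono_onI)
  fix a b :: real
  assume "a \<in> {1..}" "b \<in> {1..}" "a < b"
  then have ab: "0 \<le> a - 1" "a - 1 < b - 1" by auto
  have "(a - 1) / (2 * a - 1) \<le> (b - 1) / (2 * b - 1)"
    using ab by (simp add: divide_simps) (simp add: algebra_simps)
  then have "(a - 1) * ((a - 1) / (2 * a - 1)) ^ 2 \<le> (a - 1) * ((b - 1) / (2 * b - 1)) ^ 2"
    using ab by (intro mult_left_mono power_mono) auto
  also have "\<dots> < (b - 1) * ((b - 1) / (2 * b - 1)) ^ 2"
    using ab by (intro mult_strict_right_mono) auto
  finally show "(a - 1) ^ 3 / (2 * a - 1) ^ 2 < (b - 1) ^ 3 / (2 * b - 1) ^ 2"
    unfolding rho_fun_factor .
qed

lemma rho_eq_ex1: "\<exists>!x. rho_eq r x"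
proof -
  define f where "f = (\<lambda>x::real. (x - 1) ^ 3 / (2 * x - 1) ^ 2)"
  define b where "b = 2 + 9 * r ^ 2"
  have "1 \<le> b - 1"
    unfolding b_def by simp
  then have third: "1 / 3 \<le> (b - 1) / (2 * b - 1)"
    by (simp add: field_simps)
  have "r ^ 2 \<le> (b - 1) * (1 / 3) ^ 2"
    unfolding b_def by (simp add: power2_eq_square)
  also have "\<dots> \<le> (b - 1) * ((b - 1) / (2 * b - 1)) ^ 2"
    using third unfolding b_def by (intro mult_left_mono power_mono) auto
  finally have "r ^ 2 \<le> f b"
    unfolding f_def rho_fun_factor .
  moreover have "continuous_on {1..b} f"
    unfolding f_def by (intro continuous_intros) auto
  moreover have "f 1 \<le> r ^ 2" "1 \<le> b"
    unfolding f_def b_def by simp_all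
  ultimately obtain x where "1 \<le> x" "x \<le> b" "f x = r ^ 2"
    using IVT'[of f 1 "r ^ 2" b] by auto
  then have "rho_eq r x"
    unfolding rho_eq_iff f_def by simp
  moreover have "z = x" if "rho_eq r z" "rho_eq r x" for z
    using strict_mono_on_imp_inj_on[OF strict_mono_on_rho_fun] that
    unfolding rho_eq_iff inj_on_def by simp
  ultimately show ?thesis by blast
qed

section \<open>Second-moment tail bounds\<close>

lemma integral_indicator_atLeast:
  fixes M :: "real measure"
  assumes "prob_space M" "sets M = sets borel"
  shows "integrable M (indicator {t..} :: real \<Rightarrow> real)" "integral\<^sup>L M (indicator {t..}) = measure M {t..}"
proof -
  interpret prob_space M by fact
  have "space M = UNIV" using sets_eq_imp_space_eq[OF assms(2)] by simp
  then show "integral\<^sup>L M (indicator {t..}) = measure M {t..}"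
    by simp
  show "integrable M (indicator {t..} :: real \<Rightarrow> real)"
    using assms(2) by (intro integrable_real_indicator) (auto simp: less_top[symmetric])
qed

lemma measure_atLeast_ge_quadratic:
  fixes M :: "real measure"
  assumes M: "prob_space M" "sets M = sets borel" and int: "integrable M (\<lambda>x. (x - h) ^ 2)"
    and "p < h"
  shows "1 - (\<integral>x. (x - h) ^ 2 \<partial>M) / (h - p) ^ 2 \<le> measure M {p..}"
proof -
  interpret prob_space M by fact
  have "1 - (x - h) ^ 2 / (h - p) ^ 2 \<le> indicator {p..} x" for x
  proof (cases "p \<le> x")
    case False
    then have "(h - p) ^ 2 \<le> (x - h) ^ 2"
      using \<open>p < h\<close> by (simp add: power2_commute power_mono)
    then show ?thesis using False \<open>p < h\<close> by simp
  qed simp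
  then have "(\<integral>x. 1 - (x - h) ^ 2 / (h - p) ^ 2 \<partial>M) \<le> (\<integral>x. indicator {p..} x \<partial>M)"
    using int integral_indicator_atLeast[OF M] by (intro integral_mono) auto
  then show ?thesis
    using int integral_indicator_atLeast[OF M] by (simp add: prob_space)
qed

(* h (x - m)^2 / (m - p)^2 - h vanishes at x = p and x = h, and is at least t - h for x >= t >= h. *)
lemma revenue_tail_pointwise:
  fixes p h t m x :: real
  assumes "m = (p + h) / 2" "0 < p" "p < h" "h \<le> t"
  shows "t * indicator {t..} x - h * indicator {p..} x \<le> h * (x - m) ^ 2 / (m - p) ^ 2 - h"
proof -
  define g where "g = m - p"
  have g: "0 < g" "h - m = g" "g < h" unfolding g_def using assms by auto
  have t_le: "t \<le> h * (t - m) ^ 2 / g ^ 2"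
  proof -
    have "h * (t - m) ^ 2 - t * g ^ 2 = (t - h) * (h * (t - h) + g * (2 * h - g))"
      using g(2) by (simp add: power2_eq_square algebra_simps)
    also have "\<dots> \<ge> 0" using g assms(4) by (intro mult_nonneg_nonneg add_nonneg_nonneg) auto
    finally show ?thesis using g by (simp add: field_simps)
  qed
  consider "x < p" | "p \<le> x" "x < t" | "t \<le> x" by linarith
  then show ?thesis
  proof cases
    case 1
    then have "g ^ 2 \<le> (x - m) ^ 2"
      using g unfolding g_def by (simp add: power2_commute power_mono)
    then have "h * g ^ 2 \<le> h * (x - m) ^ 2"
      using g by (intro mult_left_mono) auto
    then have "h \<le> h * (x - m) ^ 2 / g ^ 2"
      using g by (simp add: le_divide_eq)
    then show ?thesis using 1 assms(2-4) g_def by simp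
  next
    case 2
    then show ?thesis using assms by simp
  next
    case 3
    then have "(t - m) ^ 2 \<le> (x - m) ^ 2"
      using assms by (intro power_mono) auto
    then have "h * (t - m) ^ 2 / g ^ 2 \<le> h * (x - m) ^ 2 / g ^ 2"
      using g by (intro divide_right_mono mult_left_mono) auto
    then show ?thesis using 3 t_le assms(2-4) g_def by simp
  qed
qed

lemma revenue_tail_le:
  fixes M :: "real measure"
  assumes M: "prob_space M" "sets M = sets borel" and int: "integrable M (\<lambda>x. (x - m) ^ 2)"
    and "m = (p + h) / 2" "0 < p" "p < h" "h \<le> t"
  shows "t * measure M {t..} \<le> h * measure M {p..} + h * ((\<integral>x. (x - m) ^ 2 \<partial>M) / (m - p) ^ 2 - 1)"
proof -
  interpret prob_space M by fact
  note ind = integral_indicator_atLeast[OF M]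
  have "(\<integral>x. t * indicator {t..} x - h * indicator {p..} x \<partial>M) \<le> (\<integral>x. h * (x - m) ^ 2 / (m - p) ^ 2 - h \<partial>M)"
    using int ind revenue_tail_pointwise[OF assms(4-)] by (intro integral_mono) auto
  then show ?thesis
    using int ind by (simp add: prob_space algebra_simps)
qed

lemma mv_distsD:
  assumes "M \<in> mv_dists mu sd"
  shows "prob_space M" "sets M = sets borel" "integrable M (\<lambda>x. x)" "integrable M (\<lambda>x. x ^ 2)"
    "(\<integral>x. x \<partial>M) = mu" "(\<integral>x. (x - mu) ^ 2 \<partial>M) \<le> sd ^ 2"
  using assms unfolding mv_dists_def by auto

lemma mv_dists_second_moment:
  assumes "M \<in> mv_dists mu sd"
  shows "integrable M (\<lambda>x. (x - c) ^ 2)" "(\<integral>x. (x - c) ^ 2 \<partial>M) \<le> sd ^ 2 + (mu - c) ^ 2"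
proof -
  note M = mv_distsD[OF assms]
  interpret prob_space M by (rule M(1))
  have expand: "(x - a) ^ 2 = x ^ 2 - 2 * a * x + a ^ 2" for x a :: real
    by (simp add: power2_eq_square algebra_simps)
  show int: "integrable M (\<lambda>x. (x - c) ^ 2)"
    unfolding expand using M(3,4) by auto
  have "(\<integral>x. (x - mu) ^ 2 \<partial>M) = (\<integral>x. x ^ 2 \<partial>M) - mu ^ 2"
    unfolding expand using M(3-5) by (simp add: prob_space power2_eq_square)
  moreover have "(\<integral>x. (x - c) ^ 2 \<partial>M) = (\<integral>x. x ^ 2 \<partial>M) - 2 * c * mu + c ^ 2"
    unfolding expand using M(3-5) by (simp add: prob_space)
  ultimately show "(\<integral>x. (x - c) ^ 2 \<partial>M) \<le> sd ^ 2 + (mu - c) ^ 2"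
    using M(6) by (simp add: power2_eq_square algebra_simps)
qed

lemma mv_dists_zero_measure_atLeast:
  assumes "M \<in> mv_dists mu 0"
  shows "measure M {t..} = (if t \<le> mu then 1 else 0)"
proof -
  note M = mv_distsD[OF assms]
  interpret prob_space M by (rule M(1))
  note second = mv_dists_second_moment[OF assms, of mu]
  have "0 \<le> (\<integral>x. (x - mu) ^ 2 \<partial>M)"
    by (rule integral_nonneg_AE) simp
  moreover have "(\<integral>x. (x - mu) ^ 2 \<partial>M) \<le> 0"
    using second(2) by simp
  ultimately have "(\<integral>x. (x - mu) ^ 2 \<partial>M) = 0"
    by linarith
  then have "AE x in M. x = mu"
    using integral_nonneg_eq_0_iff_AE[OF second(1)] by simp
  moreover have "space M = UNIV"
    using sets_eq_imp_space_eq[OF M(2)] by simp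
  ultimately have "AE x in M. (x \<in> {t..}) = (x \<in> (if t \<le> mu then space M else {}))"
    by (auto elim!: AE_mp)
  then have "measure M {t..} = measure M (if t \<le> mu then space M else {})"
    using M(2) by (intro measure_eq_AE) auto
  then show ?thesis
    by (simp add: prob_space)
qed

lemma ratio_le_of_REV_le:
  assumes "0 < REV p M" "\<And>t. 0 \<le> t \<Longrightarrow> REV t M \<le> c * REV p M"
  shows "ratio (OPT M) (REV p M) \<le> ereal c"
proof -
  have "OPT M \<le> ereal (c * REV p M)"
    unfolding OPT_def using assms(2) by (intro SUP_least) auto
  then have "OPT M / ereal (REV p M) \<le> ereal (c * REV p M) / ereal (REV p M)"
    using assms(1) by (intro ereal_divide_right_mono) auto
  then show ?thesis
    unfolding ratio_def using assms(1) by simp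
qed

lemma REV_quotient_le_ratio:
  assumes "0 < REV p M" "0 \<le> t"
  shows "ereal (REV t M / REV p M) \<le> ratio (OPT M) (REV p M)"
proof -
  have "ereal (REV t M) \<le> OPT M"
    unfolding OPT_def using assms(2) by (intro SUP_upper) auto
  then have "ereal (REV t M) / ereal (REV p M) \<le> OPT M / ereal (REV p M)"
    using assms(1) by (intro ereal_divide_right_mono) auto
  then show ?thesis
    unfolding ratio_def using assms(1) by simp
qed

lemma one_le_ratio:
  assumes "0 \<le> p"
  shows "1 \<le> ratio (OPT M) (REV p M)"
proof (cases "REV p M = 0")
  case False
  then have "0 < REV p M"
    using assms unfolding REV_def by (simp add: order_less_le)
  from REV_quotient_le_ratio[OF this assms] this show ?thesis
    by (simp add: one_ereal_def)
qed (simp add: ratio_def)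

definition worst_ratio :: "real \<Rightarrow> real \<Rightarrow> real \<Rightarrow> ereal" where
  "worst_ratio mu sd p = (SUP M\<in>mv_dists mu sd. ratio (OPT M) (REV p M))"

section \<open>The optimal price\<close>

definition opt_price :: "real \<Rightarrow> real \<Rightarrow> real" where
  "opt_price rho mu = rho / (2 * rho - 1) * mu"

lemma opt_price_pos: "0 < mu \<Longrightarrow> 1 \<le> rho \<Longrightarrow> 0 < opt_price rho mu"
  unfolding opt_price_def by simp

lemma opt_price_parametrization:
  fixes rho mu sd :: real
  assumes "1 < rho" "sd ^ 2 = mu ^ 2 * (rho - 1) ^ 3 / (2 * rho - 1) ^ 2"
  obtains D k where "1 < D" "rho = (D + 1) / 2" "mu = 2 * D * k" "opt_price rho mu = (D + 1) * k"
    "sd ^ 2 = k ^ 2 * (D - 1) ^ 3 / 2"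
proof
  define D where "D = 2 * rho - 1"
  define k where "k = mu / (2 * D)"
  show D: "1 < D" "rho = (D + 1) / 2"
    unfolding D_def using assms(1) by simp_all
  then show mu: "mu = 2 * D * k"
    unfolding k_def by simp
  show "opt_price rho mu = (D + 1) * k"
    unfolding opt_price_def mu D(2) using D(1) by (simp add: field_simps)
  have rho: "2 * rho - 1 = D" "rho - 1 = (D - 1) / 2"
    using D(2) by simp_all
  have "sd ^ 2 = (2 * D * k) ^ 2 * ((D - 1) / 2) ^ 3 / D ^ 2"
    using assms(2) unfolding mu rho .
  also have "\<dots> = k ^ 2 * (D - 1) ^ 3 / 2"
    using D(1) by (simp add: field_simps power2_eq_square power3_eq_cube)
  finally show "sd ^ 2 = k ^ 2 * (D - 1) ^ 3 / 2" .
qed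

(* Both identities say that the law with mass 1 - 1/rho at p and 1/rho at rho p has mean mu
   and variance sd^2: the two quadratic bounds above are tight at the optimal price. *)
lemma opt_price_identities:
  fixes rho mu sd :: real
  assumes "1 < rho" "sd ^ 2 = mu ^ 2 * (rho - 1) ^ 3 / (2 * rho - 1) ^ 2" "p = opt_price rho mu"
  shows "rho * (sd ^ 2 + (mu - rho * p) ^ 2) = (rho - 1) * (rho * p - p) ^ 2"
    "sd ^ 2 + (mu - (p + rho * p) / 2) ^ 2 = ((p + rho * p) / 2 - p) ^ 2"
proof -
  obtain D k where D: "rho = (D + 1) / 2" "mu = 2 * D * k" "p = (D + 1) * k"
    "sd ^ 2 = k ^ 2 * (D - 1) ^ 3 / 2"
    using opt_price_parametrization[OF assms(1,2)] assms(3) by metis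
  show "rho * (sd ^ 2 + (mu - rho * p) ^ 2) = (rho - 1) * (rho * p - p) ^ 2"
    "sd ^ 2 + (mu - (p + rho * p) / 2) ^ 2 = ((p + rho * p) / 2 - p) ^ 2"
    unfolding D by (simp_all add: field_simps power2_eq_square power3_eq_cube)
qed

lemma measure_atLeast_opt_price_ge:
  assumes M: "M \<in> mv_dists mu sd" and "0 < mu" "1 < rho"
    and sd: "sd ^ 2 = mu ^ 2 * (rho - 1) ^ 3 / (2 * rho - 1) ^ 2"
  shows "1 / rho \<le> measure M {opt_price rho mu..}"
proof -
  define p where "p = opt_price rho mu"
  define h where "h = rho * p"
  have "p < h"
    unfolding h_def p_def using opt_price_pos[of mu rho] assms(2,3) by simp
  have "1 - (\<integral>x. (x - h) ^ 2 \<partial>M) / (h - p) ^ 2 \<le> measure M {p..}"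
    using measure_atLeast_ge_quadratic[OF mv_distsD(1,2)[OF M] mv_dists_second_moment(1)[OF M] \<open>p < h\<close>] .
  moreover have "(\<integral>x. (x - h) ^ 2 \<partial>M) / (h - p) ^ 2 \<le> (sd ^ 2 + (mu - h) ^ 2) / (h - p) ^ 2"
    using mv_dists_second_moment(2)[OF M] by (intro divide_right_mono) auto
  moreover have "(sd ^ 2 + (mu - h) ^ 2) / (h - p) ^ 2 = 1 - 1 / rho"
    using opt_price_identities(1)[OF assms(3) sd p_def, folded h_def] \<open>p < h\<close> assms(3)
    by (simp add: field_simps)
  ultimately show ?thesis
    unfolding p_def by linarith
qed

lemma REV_le_opt_price_above:
  assumes M: "M \<in> mv_dists mu sd" and "0 < mu" "1 < rho"
    and sd: "sd ^ 2 = mu ^ 2 * (rho - 1) ^ 3 / (2 * rho - 1) ^ 2"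
    and t: "rho * opt_price rho mu \<le> t"
  shows "REV t M \<le> rho * REV (opt_price rho mu) M"
proof -
  define p where "p = opt_price rho mu"
  define h where "h = rho * p"
  define m where "m = (p + h) / 2"
  have p: "0 < p" "p < h"
    unfolding h_def p_def using opt_price_pos[of mu rho] assms(2,3) by simp_all
  have "0 < (m - p) ^ 2"
    using p unfolding m_def by simp
  then have "(\<integral>x. (x - m) ^ 2 \<partial>M) / (m - p) ^ 2 \<le> 1"
    using mv_dists_second_moment(2)[OF M, of m]
      opt_price_identities(2)[OF assms(3) sd p_def, folded h_def, folded m_def] by simp
  then have tail_term: "h * ((\<integral>x. (x - m) ^ 2 \<partial>M) / (m - p) ^ 2 - 1) \<le> 0"
    using p by (intro mult_nonneg_nonpos) auto
  have "h \<le> t"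
    using t unfolding h_def p_def .
  then have "t * measure M {t..} \<le> h * measure M {p..} + h * ((\<integral>x. (x - m) ^ 2 \<partial>M) / (m - p) ^ 2 - 1)"
    by (rule revenue_tail_le[OF mv_distsD(1,2)[OF M] mv_dists_second_moment(1)[OF M] m_def p])
  with tail_term have "t * measure M {t..} \<le> h * measure M {p..}"
    by linarith
  then show ?thesis
    unfolding REV_def h_def p_def by (simp add: mult.assoc)
qed

lemma REV_le_opt_price:
  assumes M: "M \<in> mv_dists mu sd" and "0 < mu" "1 < rho"
    and sd: "sd ^ 2 = mu ^ 2 * (rho - 1) ^ 3 / (2 * rho - 1) ^ 2"
  shows "0 < REV (opt_price rho mu) M" "0 \<le> t \<Longrightarrow> REV t M \<le> rho * REV (opt_price rho mu) M"
proof -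
  define p where "p = opt_price rho mu"
  interpret prob_space M by (rule mv_distsD(1)[OF M])
  have p: "0 < p"
    unfolding p_def using opt_price_pos[of mu rho] assms(2,3) by simp
  have tail': "1 / rho \<le> measure M {p..}"
    using measure_atLeast_opt_price_ge[OF assms] unfolding p_def .
  then have tail: "1 \<le> rho * measure M {p..}"
    using assms(3) by (simp add: field_simps)
  have "0 < measure M {p..}"
    using order_less_le_trans[OF divide_pos_pos[OF zero_less_one] tail'] assms(3) by simp
  then show "0 < REV (opt_price rho mu) M"
    unfolding REV_def p_def[symmetric] using p by simp
  assume "0 \<le> t"
  consider "t < p" | "p \<le> t" "t \<le> rho * p" | "rho * p \<le> t"
    by linarith
  then show "REV t M \<le> rho * REV (opt_price rho mu) M"
  proof cases
    case 1
    have "REV t M \<le> t"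
      unfolding REV_def using \<open>0 \<le> t\<close> prob_le_1 by (simp add: mult_left_le)
    also have "\<dots> \<le> p * 1"
      using 1 by simp
    also have "\<dots> \<le> p * (rho * measure M {p..})"
      using p tail by (intro mult_left_mono) auto
    finally show ?thesis
      unfolding REV_def p_def by (simp add: mult.assoc mult.left_commute)
  next
    case 2
    then have "measure M {t..} \<le> measure M {p..}"
      using mv_distsD(2)[OF M] by (intro finite_measure_mono) auto
    then have "REV t M \<le> (rho * p) * measure M {p..}"
      unfolding REV_def using 2 \<open>0 \<le> t\<close> by (intro mult_mono) auto
    then show ?thesis
      unfolding REV_def p_def by (simp add: mult.assoc)
  next
    case 3
    then show ?thesis
      using REV_le_opt_price_above[OF assms] unfolding p_def by simp
  qed
qed

lemma worst_ratio_opt_price_le: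
  assumes "0 < mu" "1 \<le> rho" and sd: "sd ^ 2 = mu ^ 2 * (rho - 1) ^ 3 / (2 * rho - 1) ^ 2"
  shows "worst_ratio mu sd (opt_price rho mu) \<le> ereal rho"
  unfolding worst_ratio_def
proof (rule SUP_least)
  fix M assume M: "M \<in> mv_dists mu sd"
  show "ratio (OPT M) (REV (opt_price rho mu) M) \<le> ereal rho"
  proof (cases "rho = 1")
    case True
    then have "M \<in> mv_dists mu 0" "opt_price rho mu = mu"
      using M sd unfolding opt_price_def by simp_all
    then show ?thesis
      using mv_dists_zero_measure_atLeast \<open>0 < mu\<close> \<open>rho = 1\<close>
      by (intro ratio_le_of_REV_le) (auto simp: REV_def)
  next
    case False
    then show ?thesis
      using REV_le_opt_price[OF M assms(1) _ sd] assms(2) by (intro ratio_le_of_REV_le) auto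
  qed
qed

section \<open>Two-point lower bounds\<close>

definition two_point :: "real \<Rightarrow> real \<Rightarrow> real \<Rightarrow> real measure" where
  "two_point q a b = distr (measure_pmf (bernoulli_pmf q)) borel (\<lambda>x. if x then b else a)"

lemma
  assumes "0 \<le> q" "q \<le> 1"
  shows prob_space_two_point: "prob_space (two_point q a b)"
    and sets_two_point: "sets (two_point q a b) = sets borel"
  unfolding two_point_def by (auto intro!: prob_space.prob_space_distr prob_space_measure_pmf)

lemma
  fixes f :: "real \<Rightarrow> real"
  assumes "0 \<le> q" "q \<le> 1" and [measurable]: "f \<in> borel_measurable borel"
  shows integrable_two_point: "integrable (two_point q a b) f"
    and integral_two_point: "(\<integral>x. f x \<partial>two_point q a b) = q * f b + (1 - q) * f a"
  unfolding two_point_def using assms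
  by (subst integrable_distr_eq integral_distr; auto intro: integrable_measure_pmf_finite)+

lemma measure_two_point_atLeast:
  assumes "0 \<le> q" "q \<le> 1"
  shows "measure (two_point q a b) {t..} = q * indicator {t..} b + (1 - q) * indicator {t..} a"
  using integral_two_point[OF assms, of "indicator {t..}"] integral_indicator_atLeast(2)[OF
    prob_space_two_point[OF assms] sets_two_point[OF assms]] by simp

lemma two_point_in_mv_dists:
  assumes "0 \<le> q" "q \<le> 1" "0 \<le> a" "0 \<le> b" "q * b + (1 - q) * a = mu"
    "q * (b - mu) ^ 2 + (1 - q) * (a - mu) ^ 2 \<le> sd ^ 2"
  shows "two_point q a b \<in> mv_dists mu sd"
proof -
  let ?M = "two_point q a b"
  have "AE x in ?M. 0 \<le> x"
    unfolding two_point_def using assms(3,4) by (subst AE_distr_iff) auto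
  moreover have "integrable ?M (\<lambda>x. x)" "integrable ?M (\<lambda>x. x ^ 2)"
    by (rule integrable_two_point[OF assms(1,2)]; simp)+
  moreover have mean: "(\<integral>x. x \<partial>?M) = mu"
    using integral_two_point[OF assms(1,2), of "\<lambda>x. x"] assms(5) by simp
  moreover have "(\<integral>x. (x - (\<integral>x. x \<partial>?M)) ^ 2 \<partial>?M) \<le> sd ^ 2"
    unfolding mean using integral_two_point[OF assms(1,2), of "\<lambda>x. (x - mu) ^ 2"] assms(6) by simp
  ultimately show ?thesis
    unfolding mv_dists_def using prob_space_two_point[OF assms(1,2)] sets_two_point[OF assms(1,2)]
    by blast
qed

lemma ratio_two_point_ge:
  assumes "0 < q" "q \<le> 1" "0 \<le> a" "a < p" "p \<le> b"
  shows "ereal (a / (p * q)) \<le> ratio (OPT (two_point q a b)) (REV p (two_point q a b))"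
    "ereal (b / p) \<le> ratio (OPT (two_point q a b)) (REV p (two_point q a b))"
proof -
  have REV: "REV p (two_point q a b) = p * q" "REV a (two_point q a b) = a"
    "REV b (two_point q a b) = b * q"
    unfolding REV_def using assms by (simp_all add: measure_two_point_atLeast)
  have "0 < REV p (two_point q a b)"
    unfolding REV(1) using assms by simp
  from REV_quotient_le_ratio[OF this, of a] REV_quotient_le_ratio[OF this, of b] assms show
    "ereal (a / (p * q)) \<le> ratio (OPT (two_point q a b)) (REV p (two_point q a b))"
    "ereal (b / p) \<le> ratio (OPT (two_point q a b)) (REV p (two_point q a b))"
    unfolding REV by simp_all
qed

(* The weights give mean mu and variance exactly sd^2. *)
definition tight_two_point :: "real \<Rightarrow> real \<Rightarrow> real \<Rightarrow> real measure" where
  "tight_two_point mu sd d = two_point (d ^ 2 / (sd ^ 2 + d ^ 2)) (mu - d) (mu + sd ^ 2 / d)"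

lemma tight_two_point_in_mv_dists:
  assumes "0 < d" "d \<le> mu"
  shows "tight_two_point mu sd d \<in> mv_dists mu sd"
proof -
  define q where "q = d ^ 2 / (sd ^ 2 + d ^ 2)"
  have pos: "0 < sd ^ 2 + d ^ 2"
    using assms(1) by (simp add: add_nonneg_pos)
  then have q: "0 \<le> q" "q \<le> 1" "1 - q = sd ^ 2 / (sd ^ 2 + d ^ 2)"
    unfolding q_def using assms(1) by (simp_all add: field_simps)
  have balance: "q * (sd ^ 2 / d) = (1 - q) * d"
    unfolding q(3) unfolding q_def using pos assms(1) by (simp add: field_simps power2_eq_square)
  then have "q * (mu + sd ^ 2 / d) + (1 - q) * (mu - d) = mu"
    by (simp add: algebra_simps)
  moreover have "q * ((mu + sd ^ 2 / d) - mu) ^ 2 + (1 - q) * ((mu - d) - mu) ^ 2 = sd ^ 2"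
  proof -
    have "q * (sd ^ 2 / d) ^ 2 = (q * (sd ^ 2 / d)) * (sd ^ 2 / d)"
      by (simp add: power2_eq_square)
    also have "\<dots> = (1 - q) * sd ^ 2"
      unfolding balance using assms(1) by simp
    finally have "q * (sd ^ 2 / d) ^ 2 + (1 - q) * d ^ 2 = (1 - q) * (sd ^ 2 + d ^ 2)"
      by (simp add: algebra_simps)
    also have "\<dots> = sd ^ 2"
      unfolding q(3) using pos by simp
    finally show ?thesis
      by simp
  qed
  ultimately show ?thesis
    unfolding tight_two_point_def q_def[symmetric] using q assms
    by (intro two_point_in_mv_dists) auto
qed

lemma ratio_tight_two_point_ge:
  assumes "0 < d" "d \<le> mu" "mu - d < p" "p \<le> mu + sd ^ 2 / d"
  shows "ereal ((mu - d) * (sd ^ 2 + d ^ 2) / (p * d ^ 2)) \<le>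
      ratio (OPT (tight_two_point mu sd d)) (REV p (tight_two_point mu sd d))"
    "ereal ((mu + sd ^ 2 / d) / p) \<le>
      ratio (OPT (tight_two_point mu sd d)) (REV p (tight_two_point mu sd d))"
proof -
  define q where "q = d ^ 2 / (sd ^ 2 + d ^ 2)"
  have pos: "0 < sd ^ 2 + d ^ 2"
    using assms(1) by (simp add: add_nonneg_pos)
  then have q: "0 < q" "q \<le> 1"
    unfolding q_def using assms(1) by simp_all
  have "(mu - d) / (p * q) = (mu - d) * (sd ^ 2 + d ^ 2) / (p * d ^ 2)"
    unfolding q_def using pos assms(1) by (simp add: field_simps)
  then show "ereal ((mu - d) * (sd ^ 2 + d ^ 2) / (p * d ^ 2)) \<le>
      ratio (OPT (tight_two_point mu sd d)) (REV p (tight_two_point mu sd d))"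
    "ereal ((mu + sd ^ 2 / d) / p) \<le>
      ratio (OPT (tight_two_point mu sd d)) (REV p (tight_two_point mu sd d))"
    using ratio_two_point_ge[OF q, of "mu - d" p "mu + sd ^ 2 / d"] assms
    unfolding tight_two_point_def q_def[symmetric] by simp_all
qed

lemma rho_le_low_point_ratio:
  assumes "0 < mu" "1 < rho" "sd ^ 2 = mu ^ 2 * (rho - 1) ^ 3 / (2 * rho - 1) ^ 2"
    "opt_price rho mu \<le> p" "p < mu"
  shows "rho \<le> 1 + sd ^ 2 / (mu - p) ^ 2"
proof -
  obtain D k where D: "1 < D" "rho = (D + 1) / 2" "mu = 2 * D * k" "opt_price rho mu = (D + 1) * k"
    "sd ^ 2 = k ^ 2 * (D - 1) ^ 3 / 2"
    using opt_price_parametrization[OF assms(2,3)] by metis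
  have "(D + 1) * k \<le> p"
    using assms(4) unfolding D(4) .
  then have "(mu - p) ^ 2 \<le> ((D - 1) * k) ^ 2"
    using assms(5) unfolding D(3) by (intro power_mono) (auto simp: algebra_simps)
  then have "((D - 1) / 2) * (mu - p) ^ 2 \<le> ((D - 1) / 2) * ((D - 1) * k) ^ 2"
    using D(1) by (intro mult_left_mono) auto
  also have "\<dots> = sd ^ 2"
    unfolding D(5) by (simp add: power2_eq_square power3_eq_cube)
  finally have "(rho - 1) * (mu - p) ^ 2 \<le> sd ^ 2"
    unfolding D(2) by (simp add: field_simps)
  then have "rho - 1 \<le> sd ^ 2 / (mu - p) ^ 2"
    using assms(5) by (simp add: le_divide_eq)
  then show ?thesis
    by simp
qed

lemma rho_le_high_point_ratio:
  assumes "0 < mu" "1 < rho" "sd ^ 2 = mu ^ 2 * (rho - 1) ^ 3 / (2 * rho - 1) ^ 2"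
    "0 < p" "p \<le> opt_price rho mu"
  shows "rho \<le> (mu + sd ^ 2 / (mu - p)) / p"
proof -
  obtain D k where D: "1 < D" "rho = (D + 1) / 2" "mu = 2 * D * k" "opt_price rho mu = (D + 1) * k"
    "sd ^ 2 = k ^ 2 * (D - 1) ^ 3 / 2"
    using opt_price_parametrization[OF assms(2,3)] by metis
  have k: "0 < k"
    using assms(1) D(1,3) by (simp add: zero_less_mult_iff)
  have p_le: "p \<le> (D + 1) * k"
    using assms(5) unfolding D(4) .
  moreover have "k < D * k"
    using D(1) k by simp
  ultimately have "p < mu"
    unfolding D(3) by (simp add: algebra_simps)
  have "2 * (mu * (mu - p) + sd ^ 2 - rho * p * (mu - p)) =
      (p - (D + 1) * k) * ((D + 1) * p - (D ^ 2 + 4 * D - 1) * k)"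
    unfolding D(2,3,5) by (simp add: field_simps power2_eq_square power3_eq_cube)
  also have "\<dots> \<ge> 0"
  proof (rule mult_nonpos_nonpos)
    show "p - (D + 1) * k \<le> 0"
      using p_le by simp
    have "(D + 1) * p \<le> (D + 1) * ((D + 1) * k)"
      using p_le D(1) by (intro mult_left_mono) auto
    moreover have "k \<le> D * k"
      using D(1) k by simp
    ultimately show "(D + 1) * p - (D ^ 2 + 4 * D - 1) * k \<le> 0"
      by (simp add: algebra_simps power2_eq_square)
  qed
  finally have "rho * p * (mu - p) \<le> mu * (mu - p) + sd ^ 2"
    by simp
  then show ?thesis
    using assms(4) \<open>p < mu\<close> by (simp add: field_simps)
qed

lemma exists_ratio_ge_of_eventually:
  assumes "\<forall>\<^sub>F d in at_right d0. 0 < d \<and> d \<le> mu \<and> mu - d < p \<and> p \<le> mu + sd ^ 2 / d \<and>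
    (y < (mu - d) * (sd ^ 2 + d ^ 2) / (p * d ^ 2) \<or> y < (mu + sd ^ 2 / d) / p)"
  shows "\<exists>M\<in>mv_dists mu sd. ereal y \<le> ratio (OPT M) (REV p M)"
proof -
  obtain d where d: "0 < d" "d \<le> mu" "mu - d < p" "p \<le> mu + sd ^ 2 / d"
    and "y < (mu - d) * (sd ^ 2 + d ^ 2) / (p * d ^ 2) \<or> y < (mu + sd ^ 2 / d) / p"
    using eventually_happens'[OF trivial_limit_at_right_real assms] by blast
  then have "ereal y \<le> ereal ((mu - d) * (sd ^ 2 + d ^ 2) / (p * d ^ 2)) \<or>
      ereal y \<le> ereal ((mu + sd ^ 2 / d) / p)"
    by auto
  then show ?thesis
    using tight_two_point_in_mv_dists[OF d(1,2)] ratio_tight_two_point_ge[OF d]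
    by (meson order_trans)
qed

lemma exists_ratio_ge_above_mean:
  assumes "0 < mu" "0 < sd" "mu \<le> p"
  shows "\<exists>M\<in>mv_dists mu sd. ereal y \<le> ratio (OPT M) (REV p M)"
proof (rule exists_ratio_ge_of_eventually)
  have "filterlim (\<lambda>d. (mu - d) * (sd ^ 2 + d ^ 2) / (p * d ^ 2)) at_top (at_right 0)"
    using assms by real_asymp
  then have "\<forall>\<^sub>F d in at_right 0. y < (mu - d) * (sd ^ 2 + d ^ 2) / (p * d ^ 2)"
    by (simp add: filterlim_at_top_dense)
  moreover have "\<forall>\<^sub>F d in at_right 0. 0 < (d::real)"
    by (rule eventually_at_right_less)
  moreover have "\<forall>\<^sub>F d in at_right 0. d < mu"
    using assms(1) by real_asymp
  moreover have "\<forall>\<^sub>F d in at_right 0. p - mu \<le> sd ^ 2 / d"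
    using assms(2) by real_asymp
  ultimately show "\<forall>\<^sub>F d in at_right 0. 0 < d \<and> d \<le> mu \<and> mu - d < p \<and> p \<le> mu + sd ^ 2 / d \<and>
      (y < (mu - d) * (sd ^ 2 + d ^ 2) / (p * d ^ 2) \<or> y < (mu + sd ^ 2 / d) / p)"
    by eventually_elim (use assms(3) in auto)
qed

(* As d decreases to mu - p the low atom mu - d rises to the price p and is still sold. *)
lemma exists_ratio_ge_below_mean:
  assumes "0 < p" "p < mu" and y: "y < 1 + sd ^ 2 / (mu - p) ^ 2 \<or> y < (mu + sd ^ 2 / (mu - p)) / p"
  shows "\<exists>M\<in>mv_dists mu sd. ereal y \<le> ratio (OPT M) (REV p M)"
proof (rule exists_ratio_ge_of_eventually)
  define F where "F d = max ((mu - d) * (sd ^ 2 + d ^ 2) / (p * d ^ 2)) ((mu + sd ^ 2 / d) / p)" for d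
  have "(F \<longlongrightarrow> F (mu - p)) (at_right (mu - p))"
    unfolding F_def using assms(1,2) by (intro tendsto_intros) auto
  moreover have "(mu - (mu - p)) * (sd ^ 2 + (mu - p) ^ 2) / (p * (mu - p) ^ 2) = 1 + sd ^ 2 / (mu - p) ^ 2"
    using assms(1,2) by (simp add: field_simps)
  then have "y < F (mu - p)"
    unfolding F_def using y by auto
  ultimately have "\<forall>\<^sub>F d in at_right (mu - p). y < F d"
    by (rule order_tendstoD)
  moreover have "\<forall>\<^sub>F d in at_right (mu - p). mu - p < d"
    by (rule eventually_at_right_less)
  moreover have "\<forall>\<^sub>F d in at_right (mu - p). d < mu"
    using order_tendstoD(2)[OF tendsto_ident_at, of "mu - p" mu] assms(1) by simp
  ultimately show "\<forall>\<^sub>F d in at_right (mu - p). 0 < d \<and> d \<le> mu \<and> mu - d < p \<and> p \<le> mu + sd ^ 2 / d \<and>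
      (y < (mu - d) * (sd ^ 2 + d ^ 2) / (p * d ^ 2) \<or> y < (mu + sd ^ 2 / d) / p)"
    by eventually_elim (use assms(2) in \<open>auto simp: F_def intro!: add_increasing2\<close>)
qed

lemma exists_mv_dist_ratio_ge:
  assumes "0 < mu" "0 < sd" "1 < rho" and sd: "sd ^ 2 = mu ^ 2 * (rho - 1) ^ 3 / (2 * rho - 1) ^ 2"
    and "0 < p" "y < rho"
  shows "\<exists>M\<in>mv_dists mu sd. ereal y \<le> ratio (OPT M) (REV p M)"
proof -
  have "opt_price rho mu < mu"
    unfolding opt_price_def using assms(1,3) by (simp add: field_simps)
  consider "mu \<le> p" | "opt_price rho mu \<le> p" "p < mu" | "p < opt_price rho mu"
    by linarith
  then show ?thesis
  proof cases
    case 1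
    then show ?thesis
      using exists_ratio_ge_above_mean assms(1,2) by blast
  next
    case 2
    then show ?thesis
      using rho_le_low_point_ratio[OF assms(1,3) sd 2] assms(5,6)
      by (intro exists_ratio_ge_below_mean) auto
  next
    case 3
    then show ?thesis
      using rho_le_high_point_ratio[OF assms(1,3) sd assms(5)] \<open>opt_price rho mu < mu\<close> assms(5,6)
      by (intro exists_ratio_ge_below_mean) auto
  qed
qed

lemma worst_ratio_ge:
  assumes "0 < mu" "0 \<le> sd" "1 \<le> rho" and sd: "sd ^ 2 = mu ^ 2 * (rho - 1) ^ 3 / (2 * rho - 1) ^ 2"
    and "0 \<le> p"
  shows "ereal rho \<le> worst_ratio mu sd p"
proof -
  have witness: "tight_two_point mu sd mu \<in> mv_dists mu sd"
    using assms(1) by (simp add: tight_two_point_in_mv_dists)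
  consider "rho = 1" | "p = 0" | "1 < rho" "0 < p"
    using assms(3,5) by linarith
  then show ?thesis
  proof cases
    case 1
    then show ?thesis
      unfolding worst_ratio_def using one_le_ratio[OF assms(5)]
      by (intro SUP_upper2[OF witness]) (simp add: one_ereal_def)
  next
    case 2
    then show ?thesis
      unfolding worst_ratio_def by (intro SUP_upper2[OF witness]) (simp add: ratio_def REV_def)
  next
    case 3
    then have "0 < sd"
      using sd assms(1,2) by (cases "sd = 0") auto
    show ?thesis
    proof (rule dense_le)
      fix x assume "x < ereal rho"
      then show "x \<le> worst_ratio mu sd p"
      proof (cases x)
        case (real y)
        then obtain M where "M \<in> mv_dists mu sd" "ereal y \<le> ratio (OPT M) (REV p M)"
          using exists_mv_dist_ratio_ge[OF assms(1) \<open>0 < sd\<close> 3(1) sd 3(2), of y] \<open>x < ereal rho\<close>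
          by auto
        then show ?thesis
          unfolding worst_ratio_def real by (intro SUP_upper2)
      qed simp_all
    qed
  qed
qed

theorem theorem1:
  fixes mu sd r :: real
  assumes "mu > 0" and "sd \<ge> 0" and "r = sd / mu"
  shows "(\<exists>!\<rho>. rho_eq r \<rho>)
    \<and> DAPX mu sd = ereal (rho_D r)
    \<and> (SUP M\<in>mv_dists mu sd.
          ratio (OPT M) (REV (rho_D r / (2 * rho_D r - 1) * mu) M)) = ereal (rho_D r)"
proof -
  have unique: "\<exists>!\<rho>. rho_eq r \<rho>"
    by (rule rho_eq_ex1)
  define rho where "rho = rho_D r"
  have "rho_eq r rho"
    unfolding rho_def rho_D_def by (rule theI'[OF unique])
  then have rho: "1 \<le> rho" and "(rho - 1) ^ 3 / (2 * rho - 1) ^ 2 = (sd / mu) ^ 2"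
    unfolding rho_eq_iff assms(3) by auto
  then have sd: "sd ^ 2 = mu ^ 2 * (rho - 1) ^ 3 / (2 * rho - 1) ^ 2"
    using assms(1) by (simp add: power_divide field_simps)
  have lower: "ereal rho \<le> worst_ratio mu sd p" if "0 \<le> p" for p
    using worst_ratio_ge[OF assms(1,2) rho sd that] .
  have "0 \<le> opt_price rho mu"
    using opt_price_pos[OF assms(1) rho] by simp
  then have opt: "worst_ratio mu sd (opt_price rho mu) = ereal rho"
    using worst_ratio_opt_price_le[OF assms(1) rho sd] lower by (blast intro: antisym)
  have "DAPX mu sd = (INF p\<in>{0..}. worst_ratio mu sd p)"
    unfolding DAPX_def worst_ratio_def ..
  also have "\<dots> = ereal rho"
    using opt lower \<open>0 \<le> opt_price rho mu\<close>
    by (intro antisym INF_greatest INF_lower2[of "opt_price rho mu"]) auto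
  finally show ?thesis
    using unique opt unfolding worst_ratio_def opt_price_def rho_def by simp
qed

end
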